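(* Let $\eta>0$, let $\mathcal{I},\mathcal{J},\mathcal{K}$ be finite index sets with cluster trees $\mathcal{T}_{\mathcal{I}},\mathcal{T}_{\mathcal{J}},\mathcal{T}_{\mathcal{K}}$, where every cluster $c$ is associated with a nonempty bounded set $\Omega_c\subseteq\mathbb{R}^d$, and let $\mathcal{T}_{\mathcal{I}\times\mathcal{J}}$ and $\mathcal{T}_{\mathcal{J}\times\mathcal{K}}$ be block trees constructed by the admissibility-based procedure described in the context (so that every non-leaf block is not admissible). Let $t\in\mathcal{T}_{\mathcal{I}}$ and $r\in\mathcal{T}_{\mathcal{K}}$, and let $\mathcal{P}_{tr}$ be the set of subdivided products of the accumulator for $(t,r)$, as defined in the context. If $\mathcal{P}_{tr}$ is not empty, then there is a cluster $s\in\mathcal{T}_{\mathcal{J}}$ with $(t,s)\in\mathcal{T}_{\mathcal{I}\times\mathcal{J}}\setminus\mathcal{L}_{\mathcal{I}\times\mathcal{J}}$ and $(s,r)\in\mathcal{T}_{\mathcal{J}\times\mathcal{K}}\setminus\mathcal{L}_{\mathcal{J}\times\mathcal{K}}$ such that \[ \frac{\eta}{\eta+1}\operatorname{dist}(\Omega_t,\Omega_r) < \max\{\operatorname{diam}(\Omega_t),\operatorname{diam}(\Omega_s),\operatorname{diam}(\Omega_r)\}. \]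
   Context: A cluster tree $\mathcal{T}_{\mathcal{I}}$ for a finite index set $\mathcal{I}$ is a finite tree whose nodes (clusters) $t$ are labeled by subsets $\hat t\subseteq\mathcal{I}$, the root labeled $\mathcal{I}$, such that the labels of the children of a non-leaf node form a disjoint partition of its label. Each cluster $t$ has an associated nonempty bounded set $\Omega_t\subseteq\mathbb{R}^d$ (with $\Omega_{t'}\subseteq\Omega_t$ for children $t'$). A pair of clusters $(t,s)$ is called admissible if $\max\{\operatorname{diam}(\Omega_t),\operatorname{diam}(\Omega_s)\}\le 2\eta\operatorname{dist}(\Omega_t,\Omega_s)$. The block tree $\mathcal{T}_{\mathcal{I}\times\mathcal{J}}$ for cluster trees $\mathcal{T}_{\mathcal{I}},\mathcal{T}_{\mathcal{J}}$ is built recursively starting from the pair of roots: a block $(t,s)$ is kept as a leaf if it is admissible; otherwise, if $t$ or $s$ has children, its children are $\{t\}\times\operatorname{chil}(s)$ if $t$ is a leaf, $\operatorname{chil}(t)\times\{s\}$ if $s$ is a leaf, and $\operatorname{chil}(t)\times\operatorname{chil}(s)$ otherwise, and these are treated recursively; if neither has children, $(t,s)$ is an inadmissible leaf. $\mathcal{L}_{\mathcal{I}\times\mathcal{J}}$ denotes the set of leaves, split into admissible leaves $\mathcal{L}^+_{\mathcal{I}\times\mathcal{J}}$ and inadmissible leaves $\mathcal{L}^-_{\mathcal{I}\times\mathcal{J}}$; analogously for $\mathcal{T}_{\mathcal{J}\times\mathcal{K}}$. Given matrices $X\in\mathbb{R}^{\mathcal{I}\times\mathcal{J}}$, $Y\in\mathbb{R}^{\mathcal{J}\times\mathcal{K}}$,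 an accumulator for $(t,r)$ collects products $X|_{\hat t\times\hat s}Y|_{\hat s\times\hat r}$ with $(t,s)\in\mathcal{T}_{\mathcal{I}\times\mathcal{J}}$, $(s,r)\in\mathcal{T}_{\mathcal{J}\times\mathcal{K}}$; such a product is stored as a triple $(s,X|_{\hat t\times\hat s},Y|_{\hat s\times\hat r})$ in the set $\mathcal{P}_{tr}$ ("subdivided products") only if neither $(t,s)\in\mathcal{L}_{\mathcal{I}\times\mathcal{J}}$ nor $(s,r)\in\mathcal{L}_{\mathcal{J}\times\mathcal{K}}$ (products with an admissible or inadmissible leaf block are stored in other components of the accumulator). Starting from the accumulator of the root pair containing the full product, accumulators for children $(t',r')$ are obtained by splitting, where each triple $(s,\cdot,\cdot)\in\mathcal{P}_{tr}$ contributes the sub-products for $s'\in\operatorname{chil}(s)$ with the same storage rule. *)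

theory Defs
  imports "HOL-Analysis.Analysis"
begin

text \<open>A cluster tree: root cluster, children function, index labels of the clusters,
  and the associated geometric sets \<open>\<Omega>_c\<close> (in a Euclidean space).\<close>

record ('c, 'i, 'a) ctree =
  ct_root :: 'c
  ct_chil :: "'c \<Rightarrow> 'c set"
  ct_lab  :: "'c \<Rightarrow> 'i set"
  ct_dom  :: "'c \<Rightarrow> 'a set"

inductive_set ct_nodes :: "('c, 'i, 'a) ctree \<Rightarrow> 'c set" for T where
  root: "ct_root T \<in> ct_nodes T"
| child: "t \<in> ct_nodes T \<Longrightarrow> c \<in> ct_chil T t \<Longrightarrow> c \<in> ct_nodes T"

definition ct_index :: "('c, 'i, 'a) ctree \<Rightarrow> 'i set" where
  "ct_index T = ct_lab T (ct_root T)"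

definition is_cluster_tree :: "('c, 'i, 'a::euclidean_space) ctree \<Rightarrow> bool" where
  "is_cluster_tree T \<longleftrightarrow>
     finite (ct_index T) \<and> finite (ct_nodes T) \<and>
     \<comment> \<open>tree shape: no cycles, root is no child, each cluster has at most one parent\<close>
     wf {(c, t). t \<in> ct_nodes T \<and> c \<in> ct_chil T t} \<and>
     (\<forall>t\<in>ct_nodes T. ct_root T \<notin> ct_chil T t) \<and>
     (\<forall>t1\<in>ct_nodes T. \<forall>t2\<in>ct_nodes T. ct_chil T t1 \<inter> ct_chil T t2 \<noteq> {} \<longrightarrow> t1 = t2) \<and>
     \<comment> \<open>labels of children form a disjoint partition of the parent label\<close>
     (\<forall>t\<in>ct_nodes T. ct_chil T t \<noteq> {} \<longrightarrow>
         \<Union> (ct_lab T ` ct_chil T t) = ct_lab T t \<and> disjoint_family_on (ct_lab T) (ct_chil T t)) \<and>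
     \<comment> \<open>geometry: nonempty bounded sets, nested along the tree\<close>
     (\<forall>t\<in>ct_nodes T. ct_dom T t \<noteq> {} \<and> bounded (ct_dom T t) \<and>
         (\<forall>c\<in>ct_chil T t. ct_dom T c \<subseteq> ct_dom T t))"

definition admissible ::
  "real \<Rightarrow> ('c1, 'i, 'a::euclidean_space) ctree \<Rightarrow> ('c2, 'j, 'a) ctree \<Rightarrow> 'c1 \<Rightarrow> 'c2 \<Rightarrow> bool" where
  "admissible eta T S t s \<longleftrightarrow>
     max (diameter (ct_dom T t)) (diameter (ct_dom S s)) \<le> 2 * eta * setdist (ct_dom T t) (ct_dom S s)"

definition block_chil ::
  "('c1, 'i, 'a) ctree \<Rightarrow> ('c2, 'j, 'a) ctree \<Rightarrow> 'c1 \<Rightarrow> 'c2 \<Rightarrow> ('c1 \<times> 'c2) set" where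
  "block_chil T S t s =
     (if ct_chil T t = {} \<and> ct_chil S s = {} then {}
      else if ct_chil T t = {} then {t} \<times> ct_chil S s
      else if ct_chil S s = {} then ct_chil T t \<times> {s}
      else ct_chil T t \<times> ct_chil S s)"

inductive_set block_tree ::
  "real \<Rightarrow> ('c1, 'i, 'a::euclidean_space) ctree \<Rightarrow> ('c2, 'j, 'a) ctree \<Rightarrow> ('c1 \<times> 'c2) set"
  for eta T S where
  root: "(ct_root T, ct_root S) \<in> block_tree eta T S"
| child: "(t, s) \<in> block_tree eta T S \<Longrightarrow> \<not> admissible eta T S t s \<Longrightarrow>
          (t', s') \<in> block_chil T S t s \<Longrightarrow> (t', s') \<in> block_tree eta T S"

definition block_leaves ::
  "real \<Rightarrow> ('c1, 'i, 'a::euclidean_space) ctree \<Rightarrow> ('c2, 'j, 'a) ctree \<Rightarrow> ('c1 \<times> 'c2) set" where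
  "block_leaves eta T S =
     {(t, s) \<in> block_tree eta T S. admissible eta T S t s \<or> block_chil T S t s = {}}"

definition sons :: "('c, 'i, 'a) ctree \<Rightarrow> 'c \<Rightarrow> 'c set" where
  "sons T t = (if ct_chil T t = {} then {t} else ct_chil T t)"

text \<open>\<open>subdiv_idx \<dots> t r s\<close>: the accumulator for \<open>(t,r)\<close> contains the subdivided
  product with middle cluster \<open>s\<close>, i.e. the triple \<open>(s, X|t\<times>s, Y|s\<times>r)\<close> is in \<open>P_tr\<close>.\<close>
inductive subdiv_idx ::
  "real \<Rightarrow> ('cI, 'i, 'a::euclidean_space) ctree \<Rightarrow> ('cJ, 'j, 'a) ctree \<Rightarrow> ('cK, 'k, 'a) ctree
   \<Rightarrow> 'cI \<Rightarrow> 'cK \<Rightarrow> 'cJ \<Rightarrow> bool"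
  for eta TI TJ TK where
  root: "(ct_root TI, ct_root TJ) \<in> block_tree eta TI TJ - block_leaves eta TI TJ \<Longrightarrow>
         (ct_root TJ, ct_root TK) \<in> block_tree eta TJ TK - block_leaves eta TJ TK \<Longrightarrow>
         subdiv_idx eta TI TJ TK (ct_root TI) (ct_root TK) (ct_root TJ)"
| split: "subdiv_idx eta TI TJ TK t r s \<Longrightarrow>
          ct_chil TI t \<noteq> {} \<or> ct_chil TK r \<noteq> {} \<Longrightarrow>
          t' \<in> sons TI t \<Longrightarrow> r' \<in> sons TK r \<Longrightarrow> s' \<in> sons TJ s \<Longrightarrow>
          (t', s') \<in> block_tree eta TI TJ - block_leaves eta TI TJ \<Longrightarrow>
          (s', r') \<in> block_tree eta TJ TK - block_leaves eta TJ TK \<Longrightarrow>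
          subdiv_idx eta TI TJ TK t' r' s'"

definition subdivided_products ::
  "real \<Rightarrow> ('cI, 'i, 'a::euclidean_space) ctree \<Rightarrow> ('cJ, 'j, 'a) ctree \<Rightarrow> ('cK, 'k, 'a) ctree
   \<Rightarrow> ('i \<Rightarrow> 'j \<Rightarrow> real) \<Rightarrow> ('j \<Rightarrow> 'k \<Rightarrow> real) \<Rightarrow> 'cI \<Rightarrow> 'cK
   \<Rightarrow> ('cJ \<times> ('i \<times> 'j \<Rightarrow> real) \<times> ('j \<times> 'k \<Rightarrow> real)) set" where
  "subdivided_products eta TI TJ TK X Y t r =
     {(s, restrict (\<lambda>(i, j). X i j) (ct_lab TI t \<times> ct_lab TJ s),
          restrict (\<lambda>(j, k). Y j k) (ct_lab TJ s \<times> ct_lab TK r)) | s. subdiv_idx eta TI TJ TK t r s}"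

end

theory Submission
  imports Defs
begin

text \<open>Proof idea: \<open>P\<^sub>t\<^sub>r\<close> is nonempty only if some middle cluster \<open>s\<close> makes both
  \<open>(t,s)\<close> and \<open>(s,r)\<close> inner, hence inadmissible, blocks. With \<open>M\<close> the largest of the three
  diameters, inadmissibility gives \<open>dist(\<Omega>\<^sub>t,\<Omega>\<^sub>s), dist(\<Omega>\<^sub>s,\<Omega>\<^sub>r) < M/(2\<eta>)\<close>, and
  passing through \<open>\<Omega>\<^sub>s\<close> costs at most \<open>diam(\<Omega>\<^sub>s) \<le> M\<close>, so
  \<open>dist(\<Omega>\<^sub>t,\<Omega>\<^sub>r) < M/\<eta> + M = M (\<eta>+1)/\<eta>\<close>.\<close>

lemma setdist_le_setdist_add_diameter_add_setdist:
  fixes A B C :: "'a::metric_space set"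
  assumes "B \<noteq> {}" and "bounded B"
  shows "setdist A C \<le> setdist A B + diameter B + setdist B C"
proof (cases "A = {} \<or> C = {}")
  case True
  then show ?thesis
    using diameter_ge_0[OF \<open>bounded B\<close>] by (auto simp: add_nonneg_nonneg)
next
  case False
  have "setdist A C - diameter B - setdist B C \<le> dist a b" if "a \<in> A" "b \<in> B" for a b
  proof -
    have "setdist A C - diameter B - dist a b \<le> dist b' c" if "b' \<in> B" "c \<in> C" for b' c
    proof -
      have "setdist A C \<le> dist a c"
        using \<open>a \<in> A\<close> \<open>c \<in> C\<close> by (rule setdist_le_dist)
      also have "\<dots> \<le> dist a b + dist b b' + dist b' c"
        by (metis add_right_mono dist_triangle order_trans)
      also have "dist b b' \<le> diameter B"
        using \<open>bounded B\<close> \<open>b \<in> B\<close> \<open>b' \<in> B\<close> by (rule diameter_bounded_bound)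
      finally show ?thesis by simp
    qed
    then have "setdist A C - diameter B - dist a b \<le> setdist B C"
      using \<open>B \<noteq> {}\<close> False by (intro le_setdistI) auto
    then show ?thesis by simp
  qed
  then have "setdist A C - diameter B - setdist B C \<le> setdist A B"
    using \<open>B \<noteq> {}\<close> False by (intro le_setdistI) auto
  then show ?thesis by simp
qed

lemma setdist_bound_through_inadmissible_middle:
  fixes A B C :: "'a::metric_space set"
  assumes "eta > 0" and "B \<noteq> {}" and "bounded B"
    and AB: "\<not> max (diameter A) (diameter B) \<le> 2 * eta * setdist A B"
    and BC: "\<not> max (diameter B) (diameter C) \<le> 2 * eta * setdist B C"
  shows "eta / (eta + 1) * setdist A C < max (diameter A) (max (diameter B) (diameter C))"
proof -
  define M where "M = max (diameter A) (max (diameter B) (diameter C))"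
  have "2 * eta * setdist A B < M" and "2 * eta * setdist B C < M"
    using AB BC by (auto simp: M_def)
  then have "2 * eta * (setdist A B + setdist B C) < 2 * M"
    by (simp add: distrib_left)
  moreover have "eta * diameter B \<le> eta * M"
    using \<open>eta > 0\<close> by (simp add: M_def)
  ultimately have "eta * (setdist A B + diameter B + setdist B C) < (eta + 1) * M"
    by (simp add: algebra_simps)
  moreover have "eta * setdist A C \<le> eta * (setdist A B + diameter B + setdist B C)"
    using \<open>eta > 0\<close> setdist_le_setdist_add_diameter_add_setdist[OF \<open>B \<noteq> {}\<close> \<open>bounded B\<close>]
    by (intro mult_left_mono) auto
  ultimately have "eta * setdist A C < (eta + 1) * M"
    by linarith
  then show ?thesis
    using \<open>eta > 0\<close> by (simp add: M_def pos_divide_less_eq mult.commute)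
qed

lemma block_tree_nodes:
  assumes "(t, s) \<in> block_tree eta T S"
  shows "t \<in> ct_nodes T" and "s \<in> ct_nodes S"
  using assms
  by (induction rule: block_tree.induct)
    (auto simp: block_chil_def split: if_splits intro: ct_nodes.intros)

lemma inner_block_not_admissible:
  "(t, s) \<in> block_tree eta T S - block_leaves eta T S \<Longrightarrow> \<not> admissible eta T S t s"
  by (auto simp: block_leaves_def)

lemma subdiv_idx_inner_blocks:
  assumes "subdiv_idx eta TI TJ TK t r s"
  shows "(t, s) \<in> block_tree eta TI TJ - block_leaves eta TI TJ"
    and "(s, r) \<in> block_tree eta TJ TK - block_leaves eta TJ TK"
  using assms by (cases rule: subdiv_idx.cases; simp)+

lemma cluster_tree_dom_nonempty_bounded:
  "is_cluster_tree T \<Longrightarrow> t \<in> ct_nodes T \<Longrightarrow> ct_dom T t \<noteq> {} \<and> bounded (ct_dom T t)"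
  by (simp add: is_cluster_tree_def)

theorem lemma3p1:
  fixes eta :: real
    and TI :: "('cI, 'i, 'a::euclidean_space) ctree"
    and TJ :: "('cJ, 'j, 'a) ctree"
    and TK :: "('cK, 'k, 'a) ctree"
    and X :: "'i \<Rightarrow> 'j \<Rightarrow> real" and Y :: "'j \<Rightarrow> 'k \<Rightarrow> real"
    and t :: 'cI and r :: 'cK
  assumes "eta > 0"
    and "is_cluster_tree TI" and "is_cluster_tree TJ" and "is_cluster_tree TK"
    and "t \<in> ct_nodes TI" and "r \<in> ct_nodes TK"
    and "subdivided_products eta TI TJ TK X Y t r \<noteq> {}"
  shows "\<exists>s\<in>ct_nodes TJ.
           (t, s) \<in> block_tree eta TI TJ - block_leaves eta TI TJ \<and>
           (s, r) \<in> block_tree eta TJ TK - block_leaves eta TJ TK \<and>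
           eta / (eta + 1) * setdist (ct_dom TI t) (ct_dom TK r)
             < max (diameter (ct_dom TI t)) (max (diameter (ct_dom TJ s)) (diameter (ct_dom TK r)))"
proof -
  obtain s where s: "subdiv_idx eta TI TJ TK t r s"
    using assms(7) unfolding subdivided_products_def by blast
  note inner = subdiv_idx_inner_blocks[OF s]
  have "s \<in> ct_nodes TJ"
    using inner(2) by (blast dest: block_tree_nodes)
  then have "ct_dom TJ s \<noteq> {}" and "bounded (ct_dom TJ s)"
    using cluster_tree_dom_nonempty_bounded[OF assms(3)] by blast+
  then have "eta / (eta + 1) * setdist (ct_dom TI t) (ct_dom TK r)
          < max (diameter (ct_dom TI t)) (max (diameter (ct_dom TJ s)) (diameter (ct_dom TK r)))"
    using inner_block_not_admissible[OF inner(1)] inner_block_not_admissible[OF inner(2)]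
    unfolding admissible_def by (intro setdist_bound_through_inadmissible_middle assms(1))
  with \<open>s \<in> ct_nodes TJ\<close> inner show ?thesis by blast
qed

end
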